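(* Let $\boldsymbol\lambda,\boldsymbol\mu\in\Pi^l_m$ and $\lambda,\mu\in\Pi$ with $\boldsymbol\lambda\leftrightarrow\lambda$, $\boldsymbol\mu\leftrightarrow\mu$. If $j_{\boldsymbol\lambda,\boldsymbol\mu}\neq0$ (so that (J1) or (J2) holds, with ribbons $\rho,\rho'$), then $N_i(\rho)=N_i(\rho')$ for all $i\in\mathbb Z$, and $|\lambda|=|\mu|$.
   Context: Fix $n,l,m\ge1$, $\mathbf s_l=(s_1,\dots,s_l)\in\mathbb Z^l$, $s=\sum s_b$. Partitions are identified with Young diagrams; $\Pi^l_m$ = $l$-tuples of partitions of total size $m$, nodes $(i,j,b)$ with content $s_b+j-i$ and $\mathrm{res}_n$ = content mod $n$. For a set of nodes $\theta$, $N_i(\theta)=\#\{\gamma\in\theta:\mathrm{res}_n(\gamma)=i\bmod n\}$. Ribbon: nonempty connected skew diagram with no $2\times2$ square; head = node with $j-i$ minimal; $\mathrm{ht}$ = row of head minus row of tail; length = number of nodes. Each $k\in\mathbb Z$ is uniquely $k=c(k)+n(d(k)-1)+nl\,m(k)$, $c(k)\in\{1..n\}$, $d(k)\in\{1..l\}$; $\phi(k)=c(k)+n\,m(k)$. $\boldsymbol\lambda\leftrightarrow\lambda$ iff $\{(\lambda^{(b)}_i+s_b+1-i,b):i\ge1,1\le b\le l\}=\{(\phi(k),d(k)):k\in\{\lambda_i+s+1-i:i\ge1\}\}$. (J1): $\boldsymbol\lambda\ne\boldsymbol\mu$, there are $d\ne d'$ with $\mu^{(d)}\subset\lambda^{(d)}$,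 $\lambda^{(d')}\subset\mu^{(d')}$, $\lambda^{(b)}=\mu^{(b)}$ otherwise, and $\rho:=\lambda^{(d)}/\mu^{(d)}$ (component $d$), $\rho':=\mu^{(d')}/\lambda^{(d')}$ (component $d'$) ribbons of common length $\hat h$. (J2): $\boldsymbol\lambda\ne\boldsymbol\mu$, there is $d$ with $\lambda^{(b)}=\mu^{(b)}$ for $b\ne d$, $\rho:=\lambda^{(d)}/(\lambda^{(d)}\cap\mu^{(d)})$, $\rho':=\mu^{(d)}/(\lambda^{(d)}\cap\mu^{(d)})$ ribbons of common length $\hat h$. $j_{\boldsymbol\lambda,\boldsymbol\mu}\in\mathbb Z$: in case (J1), $(-1)^{\mathrm{ht}\rho+\mathrm{ht}\rho'}$ if $\mathrm{res}_n(\mathrm{hd}\rho)=\mathrm{res}_n(\mathrm{hd}\rho')$, else $0$; in case (J2), $(-1)^{\mathrm{ht}\rho+\mathrm{ht}\rho'}\varepsilon$ with $\varepsilon=1$ if head residues are equal and $\hat h\not\equiv0\pmod n$, $\varepsilon=-1$ if they differ and $\hat h\equiv0\pmod n$, $\varepsilon=0$ otherwise; in all other cases $0$. *)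

theory Defs
  imports Main
begin

text \<open>Cells of a Young diagram are pairs (i,j) (row i, column j), both starting at 1.
  A partition is identified with its Young diagram.\<close>

type_synonym cell = "nat \<times> nat"

definition is_partition :: "cell set \<Rightarrow> bool" where
  "is_partition Y \<longleftrightarrow> finite Y \<and> (\<forall>(i,j)\<in>Y. 1 \<le> i \<and> 1 \<le> j) \<and>
     (\<forall>i j i' j'. (i,j) \<in> Y \<and> 1 \<le> i' \<and> i' \<le> i \<and> 1 \<le> j' \<and> j' \<le> j \<longrightarrow> (i',j') \<in> Y)"

definition part :: "cell set \<Rightarrow> nat \<Rightarrow> nat" where
  "part Y i = card {j. (i,j) \<in> Y}"

definition is_multipartition :: "nat \<Rightarrow> (nat \<Rightarrow> cell set) \<Rightarrow> bool" where
  "is_multipartition l lam \<longleftrightarrow> (\<forall>b\<in>{1..l}. is_partition (lam b)) \<and> (\<forall>b. b \<notin> {1..l} \<longrightarrow> lam b = {})"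

definition Pi_lm :: "nat \<Rightarrow> nat \<Rightarrow> (nat \<Rightarrow> cell set) set" where
  "Pi_lm l m = {lam. is_multipartition l lam \<and> (\<Sum>b=1..l. card (lam b)) = m}"

definition content :: "(nat \<Rightarrow> int) \<Rightarrow> nat \<times> nat \<times> nat \<Rightarrow> int" where
  "content s \<gamma> = (case \<gamma> of (i,j,b) \<Rightarrow> s b + int j - int i)"

definition res :: "nat \<Rightarrow> int \<Rightarrow> int" where
  "res n x = x mod int n"

definition comp_nodes :: "nat \<Rightarrow> cell set \<Rightarrow> (nat \<times> nat \<times> nat) set" where
  "comp_nodes d R = (\<lambda>(i,j). (i,j,d)) ` R"

definition Ncount :: "nat \<Rightarrow> (nat \<Rightarrow> int) \<Rightarrow> int \<Rightarrow> (nat \<times> nat \<times> nat) set \<Rightarrow> nat" where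
  "Ncount n s i \<theta> = card {\<gamma>\<in>\<theta>. res n (content s \<gamma>) = i mod int n}"

definition adj_in :: "cell set \<Rightarrow> (cell \<times> cell) set" where
  "adj_in R = {(x,y). x \<in> R \<and> y \<in> R \<and>
     \<bar>int (fst x) - int (fst y)\<bar> + \<bar>int (snd x) - int (snd y)\<bar> = 1}"

definition is_skew :: "cell set \<Rightarrow> bool" where
  "is_skew R \<longleftrightarrow> (\<exists>Y Z. is_partition Y \<and> is_partition Z \<and> Z \<subseteq> Y \<and> R = Y - Z)"

definition is_ribbon :: "cell set \<Rightarrow> bool" where
  "is_ribbon R \<longleftrightarrow> R \<noteq> {} \<and> is_skew R \<and> (\<forall>x\<in>R. \<forall>y\<in>R. (x,y) \<in> (adj_in R)\<^sup>*) \<and>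
     \<not> (\<exists>i j. (i,j) \<in> R \<and> (i+1,j) \<in> R \<and> (i,j+1) \<in> R \<and> (i+1,j+1) \<in> R)"

definition rhead :: "cell set \<Rightarrow> cell" where
  "rhead R = (THE c. c \<in> R \<and> (\<forall>c'\<in>R. int (snd c) - int (fst c) \<le> int (snd c') - int (fst c')))"

definition rtail :: "cell set \<Rightarrow> cell" where
  "rtail R = (THE c. c \<in> R \<and> (\<forall>c'\<in>R. int (snd c') - int (fst c') \<le> int (snd c) - int (fst c)))"

text \<open>Height: row of head minus row of tail (nonnegative for ribbons).\<close>
definition ht :: "cell set \<Rightarrow> nat" where
  "ht R = fst (rhead R) - fst (rtail R)"

definition decomp :: "nat \<Rightarrow> nat \<Rightarrow> int \<Rightarrow> int \<times> int \<times> int" where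
  "decomp n l k = (THE (c,d,m). 1 \<le> c \<and> c \<le> int n \<and> 1 \<le> d \<and> d \<le> int l \<and>
      k = c + int n * (d - 1) + int n * int l * m)"

definition cfun :: "nat \<Rightarrow> nat \<Rightarrow> int \<Rightarrow> int" where
  "cfun n l k = fst (decomp n l k)"
definition dfun :: "nat \<Rightarrow> nat \<Rightarrow> int \<Rightarrow> nat" where
  "dfun n l k = nat (fst (snd (decomp n l k)))"
definition mfun :: "nat \<Rightarrow> nat \<Rightarrow> int \<Rightarrow> int" where
  "mfun n l k = snd (snd (decomp n l k))"
definition phi :: "nat \<Rightarrow> nat \<Rightarrow> int \<Rightarrow> int" where
  "phi n l k = cfun n l k + int n * mfun n l k"

definition corresp :: "nat \<Rightarrow> nat \<Rightarrow> (nat \<Rightarrow> int) \<Rightarrow> (nat \<Rightarrow> cell set) \<Rightarrow> cell set \<Rightarrow> bool" where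
  "corresp n l s blam lam \<longleftrightarrow>
     {(int (part (blam b) i) + s b + 1 - int i, b) | i b. 1 \<le> i \<and> 1 \<le> b \<and> b \<le> l}
   = {(phi n l k, dfun n l k) | k. \<exists>i\<ge>1. k = int (part lam i) + (\<Sum>b=1..l. s b) + 1 - int i}"

definition J1 :: "nat \<Rightarrow> (nat \<Rightarrow> cell set) \<Rightarrow> (nat \<Rightarrow> cell set) \<Rightarrow> nat \<Rightarrow> nat \<Rightarrow> bool" where
  "J1 l lam mu d d' \<longleftrightarrow> lam \<noteq> mu \<and> d \<in> {1..l} \<and> d' \<in> {1..l} \<and> d \<noteq> d' \<and>
     mu d \<subseteq> lam d \<and> lam d' \<subseteq> mu d' \<and> (\<forall>b\<in>{1..l}. b \<noteq> d \<and> b \<noteq> d' \<longrightarrow> lam b = mu b) \<and>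
     is_ribbon (lam d - mu d) \<and> is_ribbon (mu d' - lam d') \<and>
     card (lam d - mu d) = card (mu d' - lam d')"

definition J2 :: "nat \<Rightarrow> (nat \<Rightarrow> cell set) \<Rightarrow> (nat \<Rightarrow> cell set) \<Rightarrow> nat \<Rightarrow> bool" where
  "J2 l lam mu d \<longleftrightarrow> lam \<noteq> mu \<and> d \<in> {1..l} \<and> (\<forall>b\<in>{1..l}. b \<noteq> d \<longrightarrow> lam b = mu b) \<and>
     is_ribbon (lam d - (lam d \<inter> mu d)) \<and> is_ribbon (mu d - (lam d \<inter> mu d)) \<and>
     card (lam d - (lam d \<inter> mu d)) = card (mu d - (lam d \<inter> mu d))"

definition head_res :: "nat \<Rightarrow> (nat \<Rightarrow> int) \<Rightarrow> nat \<Rightarrow> cell set \<Rightarrow> int" where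
  "head_res n s d R = res n (content s (fst (rhead R), snd (rhead R), d))"

definition jcoef :: "nat \<Rightarrow> nat \<Rightarrow> (nat \<Rightarrow> int) \<Rightarrow> (nat \<Rightarrow> cell set) \<Rightarrow> (nat \<Rightarrow> cell set) \<Rightarrow> int" where
  "jcoef n l s lam mu =
    (if \<exists>d d'. J1 l lam mu d d' then
       (let (d, d') = (SOME (d, d'). J1 l lam mu d d');
            \<rho> = lam d - mu d; \<rho>' = mu d' - lam d'
        in if head_res n s d \<rho> = head_res n s d' \<rho>' then (-1) ^ (ht \<rho> + ht \<rho>') else 0)
     else if \<exists>d. J2 l lam mu d then
       (let d = (SOME d. J2 l lam mu d);
            \<rho> = lam d - (lam d \<inter> mu d); \<rho>' = mu d - (lam d \<inter> mu d);
            h = card \<rho>;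
            \<epsilon> = (if head_res n s d \<rho> = head_res n s d \<rho>' \<and> \<not> (int n dvd int h) then 1
                 else if head_res n s d \<rho> \<noteq> head_res n s d \<rho>' \<and> int n dvd int h then -1
                 else 0)
        in (-1) ^ (ht \<rho> + ht \<rho>') * \<epsilon>)
     else 0)"

end

theory Submission
  imports Defs
begin

text \<open>
  The contents of the cells of a ribbon are consecutive integers, starting with the content of
  its head. Hence the sum of an \<open>n\<close>-periodic function over the contents of a ribbon depends
  only on its length and head residue, and only on its length when \<open>n\<close> divides the length.
  A nonzero coefficient \<open>j\<close> forces exactly these coincidences for the two ribbons, so every
  \<open>n\<close>-periodic function has the same sum over both; residue indicators give \<open>N\<^sub>i(\<rho>) = N\<^sub>i(\<rho>')\<close>.

  For the sizes, the beta-set of \<open>\<lambda>\<close> is the image of the beta-sets of the components under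
  \<open>k \<mapsto> (\<phi>(k), d(k))\<close>. A cell of content \<open>c\<close> in component \<open>b\<close> moves a bead of that
  component from \<open>s\<^sub>b + c\<close> to \<open>s\<^sub>b + c + 1\<close>, hence the corresponding bead of \<open>\<lambda>\<close> by
  \<open>w(s\<^sub>b + c)\<close> positions, where \<open>w(z) = 1 + n(l - 1)\<close> if \<open>n\<close> divides \<open>z\<close> and \<open>w(z) = 1\<close>
  otherwise. So \<open>|\<lambda>| - |\<mu>|\<close> is the sum of the \<open>n\<close>-periodic \<open>w\<close> over one ribbon minus its sum
  over the other, which vanishes.
\<close>

definition cell_content :: "cell \<Rightarrow> int" where
  "cell_content x = int (snd x) - int (fst x)"

section \<open>Young diagrams\<close>

lemma is_partition_downward_closed:
  assumes "is_partition Y" "(i, j) \<in> Y" "1 \<le> i'" "i' \<le> i" "1 \<le> j'" "j' \<le> j"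
  shows "(i', j') \<in> Y"
  using assms unfolding is_partition_def by blast

lemma is_partition_cell_pos:
  assumes "is_partition Y" "(i, j) \<in> Y"
  shows "1 \<le> i" "1 \<le> j"
  using assms unfolding is_partition_def by blast+

lemma is_partition_finite: "is_partition Y \<Longrightarrow> finite Y"
  unfolding is_partition_def by blast

lemma row_eq_part:
  assumes Y: "is_partition Y"
  shows "{j. (i, j) \<in> Y} = {1..part Y i}"
proof -
  let ?S = "{j. (i, j) \<in> Y}"
  have "?S \<subseteq> snd ` Y" by force
  then have fin: "finite ?S" using is_partition_finite[OF Y] finite_subset by blast
  have "?S \<subseteq> {1..card ?S}"
  proof
    fix j assume "j \<in> ?S"
    then have ij: "(i, j) \<in> Y" by simp
    have "{1..j} \<subseteq> ?S"
    proof
      fix j' assume "j' \<in> {1..j}"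
      then show "j' \<in> ?S"
        using is_partition_downward_closed[OF Y ij _ order_refl] is_partition_cell_pos[OF Y ij]
        by simp
    qed
    from card_mono[OF fin this] have "j \<le> card ?S" by simp
    then show "j \<in> {1..card ?S}" using is_partition_cell_pos[OF Y ij] by simp
  qed
  moreover have "card ?S = card {1..card ?S}" by simp
  ultimately have "?S = {1..card ?S}" by (intro card_subset_eq) simp_all
  then show ?thesis unfolding part_def .
qed

lemma mem_partition_iff:
  assumes "is_partition Y"
  shows "(i, j) \<in> Y \<longleftrightarrow> 1 \<le> j \<and> j \<le> part Y i"
  using row_eq_part[OF assms, of i] by (metis (mono_tags) atLeastAtMost_iff mem_Collect_eq)

lemma part_antimono:
  assumes Y: "is_partition Y" and "1 \<le> i" "i \<le> i'"
  shows "part Y i' \<le> part Y i"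
proof (cases "part Y i' = 0")
  case False
  then have "(i', part Y i') \<in> Y" using mem_partition_iff[OF Y] by simp
  then have "(i, part Y i') \<in> Y" using is_partition_downward_closed[OF Y] assms False by auto
  then show ?thesis using mem_partition_iff[OF Y] by simp
qed simp

lemma row_le_card:
  assumes Y: "is_partition Y" and ij: "(i, j) \<in> Y"
  shows "i \<le> card Y"
proof -
  have "(\<lambda>i'. (i', 1)) ` {1..i} \<subseteq> Y"
    using is_partition_downward_closed[OF Y ij] is_partition_cell_pos[OF Y ij] by auto
  then have "card ((\<lambda>i'. (i', 1::nat)) ` {1..i}) \<le> card Y"
    using is_partition_finite[OF Y] card_mono by blast
  moreover have "card ((\<lambda>i'. (i', 1::nat)) ` {1..i}) = i"
    by (subst card_image) (auto simp: inj_on_def)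
  ultimately show ?thesis by simp
qed

lemma part_eq_0_if_card_less:
  assumes Y: "is_partition Y" and "card Y < i"
  shows "part Y i = 0"
  using row_le_card[OF Y, of i 1] mem_partition_iff[OF Y, of i 1] assms(2) by linarith

lemma partition_eq_Sigma_part:
  assumes Y: "is_partition Y" and "card Y \<le> N"
  shows "Y = Sigma {1..N} (\<lambda>i. {1..part Y i})"
proof (rule set_eqI)
  fix x :: cell
  obtain i j where x: "x = (i, j)" by (cases x)
  have "(i, j) \<in> Y \<Longrightarrow> 1 \<le> i \<and> i \<le> N"
    using is_partition_cell_pos[OF Y] row_le_card[OF Y] assms(2) by fastforce
  then show "x \<in> Y \<longleftrightarrow> x \<in> Sigma {1..N} (\<lambda>i. {1..part Y i})"
    unfolding x using mem_partition_iff[OF Y] by auto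
qed

section \<open>Beta numbers\<close>

definition beta_number :: "cell set \<Rightarrow> int \<Rightarrow> nat \<Rightarrow> int" where
  "beta_number Y t i = int (part Y i) + t + 1 - int i"

definition beta_set :: "cell set \<Rightarrow> int \<Rightarrow> int set" where
  "beta_set Y t = beta_number Y t ` {1..}"

lemma beta_number_strict_antimono:
  assumes "is_partition Y" "1 \<le> i" "i < i'"
  shows "beta_number Y t i' < beta_number Y t i"
  using part_antimono[OF assms(1,2), of i'] assms(3) unfolding beta_number_def by linarith

lemma inj_on_beta_number:
  assumes "is_partition Y"
  shows "inj_on (beta_number Y t) {1..N}"
  by (rule inj_onI) (metis atLeastAtMost_iff beta_number_strict_antimono[OF assms]
      less_irrefl linorder_neqE_nat)

lemma beta_number_if_card_less:
  assumes "is_partition Y" "card Y < i"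
  shows "beta_number Y t i = t + 1 - int i"
  using part_eq_0_if_card_less[OF assms] unfolding beta_number_def by simp

text \<open>Beyond row \<open>N\<close> the beta numbers of \<open>Y\<close> and \<open>Z\<close> agree and lie below
  all earlier ones, so only the first \<open>N\<close> rows contribute to the difference.\<close>
lemma beta_set_diff_eq:
  assumes Y: "is_partition Y" and Z: "is_partition Z" and "card Y \<le> N" "card Z \<le> N"
  shows "beta_set Y t - beta_set Z t
    = beta_number Y t ` {1..N} - beta_number Z t ` {1..N}"
proof -
  have tail: "beta_number Y t i = beta_number Z t i" if "N < i" for i
    using beta_number_if_card_less[OF Y] beta_number_if_card_less[OF Z] assms(3,4) that by simp
  show ?thesis
  proof (intro equalityI subsetI)
    fix x assume "x \<in> beta_set Y t - beta_set Z t"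
    then obtain i where i: "1 \<le> i" "x = beta_number Y t i" and x: "x \<notin> beta_set Z t"
      unfolding beta_set_def by auto
    then have "i \<le> N" using tail[of i] unfolding beta_set_def by (metis atLeast_iff imageI not_le)
    then show "x \<in> beta_number Y t ` {1..N} - beta_number Z t ` {1..N}"
      using i x unfolding beta_set_def by auto
  next
    fix x assume "x \<in> beta_number Y t ` {1..N} - beta_number Z t ` {1..N}"
    then obtain i where i: "i \<in> {1..N}" "x = beta_number Y t i"
      and x: "x \<notin> beta_number Z t ` {1..N}" by auto
    have "x \<noteq> beta_number Z t i'" if "1 \<le> i'" for i'
    proof (cases "i' \<le> N")
      case True
      then show ?thesis using x that by auto
    next
      case False
      then show ?thesis
        using i tail[of i'] beta_number_strict_antimono[OF Y, of i i' t] by auto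
    qed
    then show "x \<in> beta_set Y t - beta_set Z t"
      using i unfolding beta_set_def by auto
  qed
qed

lemma finite_beta_set_diff:
  assumes "is_partition Y" "is_partition Z"
  shows "finite (beta_set Y t - beta_set Z t)"
  using beta_set_diff_eq[OF assms, of "card Y + card Z"] by simp

lemma sum_cells_telescope:
  fixes g :: "int \<Rightarrow> 'a::ab_group_add"
  assumes Y: "is_partition Y" and "card Y \<le> N"
  shows "(\<Sum>x\<in>Y. g (t + cell_content x + 1) - g (t + cell_content x))
    = (\<Sum>i=1..N. g (beta_number Y t i) - g (t + 1 - int i))"
proof -
  have row: "(\<Sum>j=1..p. g (t + int j - int i + 1) - g (t + int j - int i))
      = g (t + int p - int i + 1) - g (t + 1 - int i)" for i p
  proof -
    let ?f = "\<lambda>j::nat. g (t + int j - int i + 1)"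
    have "(\<Sum>j=1..p. g (t + int j - int i + 1) - g (t + int j - int i))
        = (\<Sum>j=Suc 0..p. ?f j - ?f (j - 1))"
      by (intro sum.cong) (auto simp: of_nat_diff algebra_simps)
    also have "\<dots> = ?f p - ?f 0" by (rule sum_telescope'') simp
    finally show ?thesis by (simp add: algebra_simps)
  qed
  have "(\<Sum>x\<in>Y. g (t + cell_content x + 1) - g (t + cell_content x))
      = (\<Sum>i=1..N. \<Sum>j=1..part Y i. g (t + int j - int i + 1) - g (t + int j - int i))"
    by (subst partition_eq_Sigma_part[OF assms], subst sum.Sigma)
      (auto simp: cell_content_def algebra_simps case_prod_beta)
  also have "\<dots> = (\<Sum>i=1..N. g (beta_number Y t i) - g (t + 1 - int i))"
    unfolding row beta_number_def by (simp add: algebra_simps)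
  finally show ?thesis .
qed

lemma sum_diff_sym_diff:
  fixes g :: "'a \<Rightarrow> 'b::ab_group_add"
  assumes "finite A" "finite B"
  shows "sum g (A - B) - sum g (B - A) = sum g A - sum g B"
  using sum.Int_Diff[OF assms(1), of g B] sum.Int_Diff[OF assms(2), of g A]
  by (simp add: Int_commute)

lemma sum_beta_set_diff:
  fixes g :: "int \<Rightarrow> 'a::ab_group_add"
  assumes Y: "is_partition Y" and Z: "is_partition Z"
  shows "(\<Sum>x\<in>beta_set Y t - beta_set Z t. g x) - (\<Sum>x\<in>beta_set Z t - beta_set Y t. g x)
    = (\<Sum>x\<in>Y. g (t + cell_content x + 1) - g (t + cell_content x))
    - (\<Sum>x\<in>Z. g (t + cell_content x + 1) - g (t + cell_content x))"
proof -
  define N where "N = card Y + card Z"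
  have N: "card Y \<le> N" "card Z \<le> N" unfolding N_def by auto
  let ?BY = "beta_number Y t ` {1..N}" and ?BZ = "beta_number Z t ` {1..N}"
  have "(\<Sum>x\<in>beta_set Y t - beta_set Z t. g x) - (\<Sum>x\<in>beta_set Z t - beta_set Y t. g x)
      = (\<Sum>x\<in>?BY - ?BZ. g x) - (\<Sum>x\<in>?BZ - ?BY. g x)"
    by (simp only: beta_set_diff_eq[OF Y Z N] beta_set_diff_eq[OF Z Y N(2,1)])
  also have "\<dots> = (\<Sum>x\<in>?BY. g x) - (\<Sum>x\<in>?BZ. g x)"
    by (rule sum_diff_sym_diff) auto
  also have "\<dots> = (\<Sum>i=1..N. g (beta_number Y t i)) - (\<Sum>i=1..N. g (beta_number Z t i))"
    by (simp only: sum.reindex[OF inj_on_beta_number[OF Y]] sum.reindex[OF inj_on_beta_number[OF Z]]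
        comp_def)
  also have "\<dots> = (\<Sum>i=1..N. g (beta_number Y t i) - g (t + 1 - int i))
      - (\<Sum>i=1..N. g (beta_number Z t i) - g (t + 1 - int i))"
    by (simp add: sum_subtractf)
  also have "\<dots> = (\<Sum>x\<in>Y. g (t + cell_content x + 1) - g (t + cell_content x))
      - (\<Sum>x\<in>Z. g (t + cell_content x + 1) - g (t + cell_content x))"
    by (simp only: sum_cells_telescope[OF Y N(1)] sum_cells_telescope[OF Z N(2)])
  finally show ?thesis .
qed

section \<open>Ribbons\<close>

lemma ribbon_skewE:
  assumes "is_ribbon R"
  obtains Y Z where "is_partition Y" "is_partition Z" "Z \<subseteq> Y" "R = Y - Z"
  using assms unfolding is_ribbon_def is_skew_def by blast

lemma ribbon_finite: "is_ribbon R \<Longrightarrow> finite R"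
  by (metis ribbon_skewE is_partition_finite finite_Diff)

lemma skew_square_if_southeast:
  assumes Y: "is_partition Y" and Z: "is_partition Z"
    and ij: "(i, j) \<in> Y - Z" and ij': "(i', j') \<in> Y - Z" and "i < i'" "j < j'"
  shows "(i + 1, j) \<in> Y - Z" "(i, j + 1) \<in> Y - Z" "(i + 1, j + 1) \<in> Y - Z"
proof -
  have pos: "1 \<le> i" "1 \<le> j" using is_partition_cell_pos[OF Y] ij by auto
  have inY: "(a, b) \<in> Y" if "1 \<le> a" "a \<le> i'" "1 \<le> b" "b \<le> j'" for a b
    using is_partition_downward_closed[OF Y _ that] ij' by simp
  have notZ: "(a, b) \<notin> Z" if "i \<le> a" "j \<le> b" for a b
    using is_partition_downward_closed[OF Z _ pos(1) that(1) pos(2) that(2)] ij by blast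
  show "(i + 1, j) \<in> Y - Z" "(i, j + 1) \<in> Y - Z" "(i + 1, j + 1) \<in> Y - Z"
    using inY notZ pos assms(5,6) by simp_all
qed

lemma inj_on_cell_content_ribbon:
  assumes "is_ribbon R"
  shows "inj_on cell_content R"
proof (rule inj_onI)
  fix x y assume x: "x \<in> R" and y: "y \<in> R" and e: "cell_content x = cell_content y"
  obtain Y Z where Y: "is_partition Y" and Z: "is_partition Z" and R: "R = Y - Z"
    using ribbon_skewE[OF assms] by metis
  have no_square: "\<not> ((i, j) \<in> R \<and> (i + 1, j) \<in> R \<and> (i, j + 1) \<in> R \<and> (i + 1, j + 1) \<in> R)"
    for i j using assms unfolding is_ribbon_def by blast
  obtain i j i' j' where xy: "x = (i, j)" "y = (i', j')" by fastforce
  have e': "int j - int i = int j' - int i'" using e xy by (simp add: cell_content_def)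
  show "x = y"
  proof (cases i i' rule: linorder_cases)
    case less
    then show ?thesis
      using skew_square_if_southeast[OF Y Z, of i j i' j'] no_square[of i j] e' x y xy R by auto
  next
    case equal
    then show ?thesis using e' xy by simp
  next
    case greater
    then show ?thesis
      using skew_square_if_southeast[OF Y Z, of i' j' i j] no_square[of i' j'] e' x y xy R by auto
  qed
qed

lemma cell_content_adj_in_le:
  assumes "(y, z) \<in> adj_in R"
  shows "z \<in> R" "cell_content z \<le> cell_content y + 1"
proof -
  have "\<bar>int (fst y) - int (fst z)\<bar> + \<bar>int (snd y) - int (snd z)\<bar> = 1" "z \<in> R"
    using assms unfolding adj_in_def by simp_all
  then show "z \<in> R" "cell_content z \<le> cell_content y + 1"
    unfolding cell_content_def by linarith+
qed

text \<open>Along a path of adjacent cells no content value is skipped, and a ribbon is connected.\<close>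
lemma ribbon_content_between:
  assumes R: "is_ribbon R" and "x \<in> R" "y \<in> R" "cell_content x \<le> c" "c \<le> cell_content y"
  shows "c \<in> cell_content ` R"
proof -
  have "(x, y) \<in> (adj_in R)\<^sup>*" using assms(1-3) unfolding is_ribbon_def by blast
  then have "\<forall>c. cell_content x \<le> c \<and> c \<le> cell_content y \<longrightarrow> c \<in> cell_content ` R"
  proof (induction rule: rtrancl_induct)
    case base
    then show ?case using assms(2) by force
  next
    case (step y z)
    show ?case
    proof (intro allI impI)
      fix c assume c: "cell_content x \<le> c \<and> c \<le> cell_content z"
      show "c \<in> cell_content ` R"
      proof (cases "c \<le> cell_content y")
        case True
        then show ?thesis using step.IH c by blast
      next
        case False
        then have "c = cell_content z" using c cell_content_adj_in_le[OF step.hyps(2)] by linarith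
        then show ?thesis using cell_content_adj_in_le(1)[OF step.hyps(2)] by blast
      qed
    qed
  qed
  then show ?thesis using assms(4,5) by blast
qed

lemma rhead_ribbon:
  assumes R: "is_ribbon R"
  shows "rhead R \<in> R" "cell_content (rhead R) = Min (cell_content ` R)"
proof -
  have fin: "finite (cell_content ` R)" using ribbon_finite[OF R] by simp
  have "cell_content ` R \<noteq> {}" using R unfolding is_ribbon_def by simp
  then obtain x where x: "x \<in> R" "cell_content x = Min (cell_content ` R)"
    using Min_in[OF fin] by (metis imageE)
  have "rhead R = x"
    unfolding rhead_def
  proof (rule the_equality)
    show "x \<in> R \<and> (\<forall>c'\<in>R. int (snd x) - int (fst x) \<le> int (snd c') - int (fst c'))"
      using x fin by (auto simp: cell_content_def[symmetric])
    fix c assume c: "c \<in> R \<and> (\<forall>c'\<in>R. int (snd c) - int (fst c) \<le> int (snd c') - int (fst c'))"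
    then have "cell_content c \<le> cell_content x" unfolding cell_content_def using x by blast
    moreover have "cell_content x \<le> cell_content c" using x c fin by simp
    ultimately have "cell_content c = cell_content x" by simp
    then show "c = x" using inj_on_cell_content_ribbon[OF R] c x by (meson inj_onD)
  qed
  then show "rhead R \<in> R" "cell_content (rhead R) = Min (cell_content ` R)" using x by simp_all
qed

lemma cell_content_ribbon_image:
  assumes R: "is_ribbon R"
  shows "cell_content ` R = (\<lambda>k. cell_content (rhead R) + int k) ` {..<card R}"
proof -
  let ?C = "cell_content ` R"
  have fin: "finite ?C" using ribbon_finite[OF R] by simp
  have ne: "?C \<noteq> {}" using R unfolding is_ribbon_def by simp
  define a where "a = cell_content (rhead R)"
  define b where "b = Max ?C"
  have "a \<in> ?C" "b \<in> ?C" unfolding a_def b_def using rhead_ribbon[OF R] fin ne by simp_all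
  then have "{a..b} \<subseteq> ?C" using ribbon_content_between[OF R] by fastforce
  moreover have "?C \<subseteq> {a..b}"
    unfolding a_def b_def rhead_ribbon(2)[OF R] using fin by auto
  ultimately have C: "?C = {a..b}" by blast
  have "card ?C = card R" using card_image[OF inj_on_cell_content_ribbon[OF R]] .
  then have "b + 1 = a + int (card R)" using C \<open>a \<in> ?C\<close> by auto
  then have "?C = {a..<a + int (card R)}" using C by auto
  also have "\<dots> = (\<lambda>k. a + int k) ` {..<card R}"
  proof (intro equalityI subsetI)
    fix z assume "z \<in> {a..<a + int (card R)}"
    then show "z \<in> (\<lambda>k. a + int k) ` {..<card R}"
      by (intro image_eqI[where x = "nat (z - a)"]) auto
  qed auto
  finally show ?thesis unfolding a_def .
qed

lemma sum_ribbon_content: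
  assumes R: "is_ribbon R"
  shows "(\<Sum>x\<in>R. f (t + cell_content x)) = (\<Sum>k<card R. f (t + cell_content (rhead R) + int k))"
proof -
  have "(\<Sum>x\<in>R. f (t + cell_content x)) = (\<Sum>c\<in>cell_content ` R. f (t + c))"
    by (simp add: sum.reindex[OF inj_on_cell_content_ribbon[OF R]])
  also have "\<dots> = (\<Sum>k<card R. f (t + cell_content (rhead R) + int k))"
    unfolding cell_content_ribbon_image[OF R] by (subst sum.reindex) (auto simp: inj_on_def add.assoc)
  finally show ?thesis .
qed

section \<open>Sums of periodic functions over ribbons\<close>

definition periodic_mod :: "nat \<Rightarrow> (int \<Rightarrow> 'a) \<Rightarrow> bool" where
  "periodic_mod n f \<longleftrightarrow> (\<forall>z z'. z mod int n = z' mod int n \<longrightarrow> f z = f z')"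

lemma sum_periodic_window_cong:
  assumes f: "periodic_mod n f" and "A mod int n = A' mod int n"
  shows "(\<Sum>k<h. f (A + int k)) = (\<Sum>k<h. f (A' + int k))"
proof (rule sum.cong)
  fix k
  have "(A + int k) mod int n = (A' + int k) mod int n" using assms(2) by (rule mod_add_cong) simp
  then show "f (A + int k) = f (A' + int k)" using f unfolding periodic_mod_def by blast
qed simp

lemma sum_periodic_window_full_period:
  fixes f :: "int \<Rightarrow> 'a::cancel_comm_monoid_add"
  assumes f: "periodic_mod n f" and "int n dvd int h"
  shows "(\<Sum>k<h. f (A + int k)) = (\<Sum>k<h. f (A' + int k))"
proof -
  let ?S = "\<lambda>B. \<Sum>k<h. f (B + int k)"
  have shift: "?S (B + 1) = ?S B" for B
  proof -
    have "f (B + int h) = f B"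
      using assms unfolding periodic_mod_def by (metis add.right_neutral dvd_imp_mod_0 mod_add_right_eq)
    have "f B + ?S (B + 1) = (\<Sum>k<Suc h. f (B + int k))"
      by (subst sum.lessThan_Suc_shift) (simp add: ac_simps)
    also have "\<dots> = f B + ?S B"
      using \<open>f (B + int h) = f B\<close> by (simp add: add.commute)
    finally show ?thesis by simp
  qed
  have "?S B = ?S 0" for B
  proof (induction B rule: int_induct[where k = 0])
    case (step1 i) then show ?case using shift[of i] by simp
  next
    case (step2 i) then show ?case using shift[of "i - 1"] by simp
  qed simp
  then show ?thesis by metis
qed

lemma sum_periodic_ribbons_eq:
  fixes f :: "int \<Rightarrow> 'a::cancel_comm_monoid_add"
  assumes f: "periodic_mod n f" and R: "is_ribbon R" and R': "is_ribbon R'"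
    and card: "card R = card R'"
    and "(t + cell_content (rhead R)) mod int n = (t' + cell_content (rhead R')) mod int n
      \<or> int n dvd int (card R)"
  shows "(\<Sum>x\<in>R. f (t + cell_content x)) = (\<Sum>x\<in>R'. f (t' + cell_content x))"
  unfolding sum_ribbon_content[OF R] sum_ribbon_content[OF R'] card[symmetric]
  using assms(5) sum_periodic_window_cong[OF f] sum_periodic_window_full_period[OF f] by blast

section \<open>Size of a partition from its l-quotient\<close>

lemma decomp_eq:
  assumes n: "1 \<le> n" and l: "1 \<le> l"
  shows "decomp n l k = ((k - 1) mod int n + 1, ((k - 1) div int n) mod int l + 1,
    ((k - 1) div int n) div int l)"
  unfolding decomp_def
proof (rule the_equality)
  let ?q = "(k - 1) div int n"
  have "int n * (?q mod int l) + int n * int l * (?q div int l) = int n * ?q"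
    by (metis distrib_left mult.assoc mod_mult_div_eq)
  then have "k = (k - 1) mod int n + 1 + int n * (?q mod int l + 1 - 1) + int n * int l * (?q div int l)"
    using mod_mult_div_eq[of "k - 1" "int n"] by (simp only: add_diff_cancel_right')
  show "case ((k - 1) mod int n + 1, ?q mod int l + 1, ?q div int l) of (c, d, m) \<Rightarrow>
      1 \<le> c \<and> c \<le> int n \<and> 1 \<le> d \<and> d \<le> int l \<and> k = c + int n * (d - 1) + int n * int l * m"
  proof -
    have "0 \<le> (k - 1) mod int n" "(k - 1) mod int n < int n" "0 \<le> ?q mod int l" "?q mod int l < int l"
      using n l by simp_all
    then show ?thesis using \<open>k = _\<close> by simp
  qed
next
  fix p :: "int \<times> int \<times> int"
  assume "case p of (c, d, m) \<Rightarrow>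
    1 \<le> c \<and> c \<le> int n \<and> 1 \<le> d \<and> d \<le> int l \<and> k = c + int n * (d - 1) + int n * int l * m"
  then obtain c d m where p: "p = (c, d, m)" and c: "1 \<le> c" "c \<le> int n"
    and d: "1 \<le> d" "d \<le> int l" and k: "k = c + int n * (d - 1) + int n * int l * m"
    by auto
  define X where "X = (d - 1) + int l * m"
  have kX: "k - 1 = (c - 1) + int n * X" unfolding X_def k by (simp add: algebra_simps)
  have "(k - 1) mod int n = c - 1" "(k - 1) div int n = X"
    unfolding kX using c by (simp_all add: mod_pos_pos_trivial div_pos_pos_trivial)
  moreover have "X mod int l = d - 1" "X div int l = m"
    unfolding X_def using d by (simp_all add: mod_pos_pos_trivial div_pos_pos_trivial)
  ultimately show "p = ((k - 1) mod int n + 1, ((k - 1) div int n) mod int l + 1,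
      ((k - 1) div int n) div int l)"
    using p by simp
qed

text \<open>With \<open>c = c(k)\<close> recovered from \<open>x = \<phi>(k)\<close> we have \<open>x - c = n m(k)\<close>, so this
  is \<open>c(k) + n(d(k) - 1) + n l m(k) = k\<close> when \<open>b = d(k)\<close>.\<close>
definition phi_inv :: "nat \<Rightarrow> nat \<Rightarrow> int \<Rightarrow> nat \<Rightarrow> int" where
  "phi_inv n l x b = ((x - 1) mod int n + 1) + int n * (int b - 1) + int l * (x - ((x - 1) mod int n + 1))"

lemma phi_inv_phi_dfun:
  assumes n: "1 \<le> n" and l: "1 \<le> l"
  shows "phi_inv n l (phi n l k) (dfun n l k) = k"
proof -
  let ?q = "(k - 1) div int n"
  have phi: "phi n l k = (k - 1) mod int n + 1 + int n * (?q div int l)"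
    unfolding phi_def cfun_def mfun_def decomp_eq[OF n l] by simp
  have dfun: "int (dfun n l k) = ?q mod int l + 1"
    unfolding dfun_def decomp_eq[OF n l] using l by simp
  have "(phi n l k - 1) mod int n = (k - 1) mod int n"
    unfolding phi using n by (simp add: mod_pos_pos_trivial)
  then have "phi_inv n l (phi n l k) (dfun n l k)
      = (k - 1) mod int n + 1 + int n * (?q mod int l) + int l * (int n * (?q div int l))"
    unfolding phi_inv_def dfun phi by simp
  also have "\<dots> = k"
  proof -
    have "int n * (?q mod int l) + int l * (int n * (?q div int l)) = int n * ?q"
      using mod_mult_div_eq[of ?q "int l"] by (metis distrib_left mult.left_commute)
    then show ?thesis using mod_mult_div_eq[of "k - 1" "int n"] by linarith
  qed
  finally show ?thesis .
qed

definition size_weight :: "nat \<Rightarrow> nat \<Rightarrow> int \<Rightarrow> int" where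
  "size_weight n l z = (if int n dvd z then 1 + int n * (int l - 1) else 1)"

lemma pred_mod_eq:
  fixes z n :: int
  assumes "0 < n"
  shows "(z - 1) mod n = (if n dvd z then n - 1 else z mod n - 1)"
proof -
  have z: "z - 1 = (z mod n - 1) + n * (z div n)" by simp
  show ?thesis
  proof (cases "n dvd z")
    case True
    then have "z - 1 = (n - 1) + n * (z div n - 1)" by (simp add: algebra_simps)
    then have "(z - 1) mod n = (n - 1) mod n" by (metis mod_mult_self2)
    also have "\<dots> = n - 1" using assms by (intro mod_pos_pos_trivial) auto
    finally show ?thesis using True by simp
  next
    case False
    then have "0 < z mod n" using assms by (simp add: dvd_eq_mod_eq_0 order_less_le)
    then have "(z - 1) mod n = (z mod n - 1) mod n" using z by (metis mod_mult_self2)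
    also have "\<dots> = z mod n - 1"
      using \<open>0 < z mod n\<close> pos_mod_bound[OF assms, of z] by (intro mod_pos_pos_trivial) auto
    finally show ?thesis using False by simp
  qed
qed

lemma phi_inv_succ_diff:
  assumes "1 \<le> n"
  shows "phi_inv n l (z + 1) b - phi_inv n l z b = size_weight n l z"
proof -
  define D where "D = z mod int n - (z - 1) mod int n"
  have "phi_inv n l (z + 1) b - phi_inv n l z b = D + int l * (1 - D)"
    unfolding phi_inv_def D_def by (simp add: algebra_simps)
  moreover have "D = (if int n dvd z then 1 - int n else 1)"
    unfolding D_def using pred_mod_eq[of "int n" z] assms by auto
  ultimately show ?thesis
    unfolding size_weight_def by (cases "int n dvd z") (simp_all add: algebra_simps)
qed

lemma periodic_mod_size_weight: "periodic_mod n (size_weight n l)"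
  unfolding periodic_mod_def size_weight_def by (simp add: dvd_eq_mod_eq_0)

definition beads :: "nat \<Rightarrow> (nat \<Rightarrow> int) \<Rightarrow> (nat \<Rightarrow> cell set) \<Rightarrow> (int \<times> nat) set" where
  "beads l s blam = {(x, b). b \<in> {1..l} \<and> x \<in> beta_set (blam b) (s b)}"

lemma corresp_beads:
  assumes "corresp n l s blam lam"
  shows "beads l s blam = (\<lambda>k. (phi n l k, dfun n l k)) ` beta_set lam (\<Sum>b=1..l. s b)"
proof -
  have "beads l s blam = {(int (part (blam b) i) + s b + 1 - int i, b) | i b. 1 \<le> i \<and> 1 \<le> b \<and> b \<le> l}"
    unfolding beads_def beta_set_def beta_number_def by auto
  also have "\<dots> = (\<lambda>k. (phi n l k, dfun n l k)) ` beta_set lam (\<Sum>b=1..l. s b)"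
    using assms unfolding corresp_def beta_set_def beta_number_def by blast
  finally show ?thesis .
qed

lemma sum_beads_diff:
  assumes A: "\<forall>b\<in>{1..l}. is_partition (A b)" and B: "\<forall>b\<in>{1..l}. is_partition (B b)"
  shows "(\<Sum>p\<in>beads l s A - beads l s B. F p)
    = (\<Sum>b=1..l. \<Sum>x\<in>beta_set (A b) (s b) - beta_set (B b) (s b). F (x, b))"
proof -
  have split: "beads l s A - beads l s B
      = (\<Union>b\<in>{1..l}. (\<lambda>x. (x, b)) ` (beta_set (A b) (s b) - beta_set (B b) (s b)))"
    unfolding beads_def by auto
  have "(\<Sum>p\<in>beads l s A - beads l s B. F p)
      = (\<Sum>b=1..l. \<Sum>p\<in>(\<lambda>x. (x, b)) ` (beta_set (A b) (s b) - beta_set (B b) (s b)). F p)"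
    unfolding split
  proof (rule sum.UNION_disjoint)
    show "\<forall>b\<in>{1..l}. finite ((\<lambda>x. (x, b)) ` (beta_set (A b) (s b) - beta_set (B b) (s b)))"
      using A B finite_beta_set_diff by blast
  qed auto
  also have "\<dots> = (\<Sum>b=1..l. \<Sum>x\<in>beta_set (A b) (s b) - beta_set (B b) (s b). F (x, b))"
    by (simp add: sum.reindex inj_on_def)
  finally show ?thesis .
qed

lemma card_diff_eq_sum_size_weight:
  assumes n: "1 \<le> n" and l: "1 \<le> l"
    and A: "\<forall>b\<in>{1..l}. is_partition (blam b)" and B: "\<forall>b\<in>{1..l}. is_partition (bmu b)"
    and lam: "is_partition lam" and mu: "is_partition mu"
    and cl: "corresp n l s blam lam" and cm: "corresp n l s bmu mu"
  shows "int (card lam) - int (card mu) =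
     (\<Sum>b=1..l. (\<Sum>x\<in>blam b. size_weight n l (s b + cell_content x))
              - (\<Sum>x\<in>bmu b. size_weight n l (s b + cell_content x)))"
proof -
  define S where "S = (\<Sum>b=1..l. s b)"
  define e where "e k = (phi n l k, dfun n l k)" for k
  define e_inv where "e_inv p = phi_inv n l (fst p) (snd p)" for p
  have e_inv: "e_inv (e k) = k" for k unfolding e_inv_def e_def using phi_inv_phi_dfun[OF n l] by simp
  then have inj: "inj e" by (metis injI)
  have beads: "beads l s blam = e ` beta_set lam S" "beads l s bmu = e ` beta_set mu S"
    using corresp_beads[OF cl] corresp_beads[OF cm] unfolding e_def S_def by simp_all
  have transfer: "(\<Sum>k\<in>beta_set Y S - beta_set Z S. k) = (\<Sum>p\<in>e ` beta_set Y S - e ` beta_set Z S. e_inv p)"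
    for Y Z
    by (simp add: image_set_diff[OF inj, symmetric] sum.reindex inj_on_subset[OF inj] e_inv)
  have "int (card lam) - int (card mu)
      = (\<Sum>k\<in>beta_set lam S - beta_set mu S. k) - (\<Sum>k\<in>beta_set mu S - beta_set lam S. k)"
    using sum_beta_set_diff[OF lam mu, of "\<lambda>k. k" S] by simp
  also have "\<dots> = (\<Sum>p\<in>beads l s blam - beads l s bmu. e_inv p) - (\<Sum>p\<in>beads l s bmu - beads l s blam. e_inv p)"
    unfolding transfer beads ..
  also have "\<dots> = (\<Sum>b=1..l. (\<Sum>x\<in>beta_set (blam b) (s b) - beta_set (bmu b) (s b). phi_inv n l x b)
      - (\<Sum>x\<in>beta_set (bmu b) (s b) - beta_set (blam b) (s b). phi_inv n l x b))"
    unfolding sum_beads_diff[OF A B] sum_beads_diff[OF B A] e_inv_def by (simp add: sum_subtractf)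
  also have "\<dots> = (\<Sum>b=1..l. (\<Sum>x\<in>blam b. size_weight n l (s b + cell_content x))
      - (\<Sum>x\<in>bmu b. size_weight n l (s b + cell_content x)))"
    using sum_beta_set_diff[of "blam b" "bmu b" "\<lambda>x. phi_inv n l x b" "s b" for b] A B
    by (intro sum.cong) (simp_all add: phi_inv_succ_diff[OF n])
  finally show ?thesis .
qed

section \<open>The conditions (J1) and (J2)\<close>

lemma J1_components_differ:
  assumes "J1 l lam mu d d'"
  shows "lam d \<noteq> mu d" "lam d' \<noteq> mu d'"
  using assms unfolding J1_def is_ribbon_def by auto

lemma J1_unique:
  assumes a: "J1 l lam mu d d'" and b: "J1 l lam mu e e'"
  shows "d = e \<and> d' = e'"
proof -
  note differ = J1_components_differ[OF a]
  have "d \<in> {1..l}" "d' \<in> {1..l}" and other: "\<forall>b\<in>{1..l}. b \<noteq> e \<and> b \<noteq> e' \<longrightarrow> lam b = mu b"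
    using a b unfolding J1_def by auto
  then have "d = e \<or> d = e'" "d' = e \<or> d' = e'" using differ by blast+
  moreover have "d \<noteq> e'"
  proof
    assume "d = e'"
    then have "mu d \<subseteq> lam d" "lam d \<subseteq> mu d" using a b unfolding J1_def by auto
    then show False using differ by blast
  qed
  moreover have "d' \<noteq> e"
  proof
    assume "d' = e"
    then have "lam d' \<subseteq> mu d'" "mu d' \<subseteq> lam d'" using a b unfolding J1_def by auto
    then show False using differ by blast
  qed
  ultimately show ?thesis by blast
qed

lemma J2_unique: "J2 l lam mu d \<Longrightarrow> J2 l lam mu e \<Longrightarrow> d = e"
  unfolding J2_def is_ribbon_def by auto

lemma not_J1_and_J2:
  assumes a: "J1 l lam mu d d'" and b: "J2 l lam mu e"
  shows False
proof -
  have "d \<in> {1..l}" "d' \<in> {1..l}" "d \<noteq> d'" and "\<forall>b\<in>{1..l}. b \<noteq> e \<longrightarrow> lam b = mu b"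
    using a b unfolding J1_def J2_def by auto
  then show False using J1_components_differ[OF a] by (cases "d = e") auto
qed

lemma J1_or_J2_if_jcoef_nonzero:
  assumes "jcoef n l s lam mu \<noteq> 0"
  shows "(\<exists>d d'. J1 l lam mu d d') \<or> (\<exists>d. J2 l lam mu d)"
proof (rule ccontr)
  assume "\<not> ?thesis"
  then have no_J1: "\<not> (\<exists>d d'. J1 l lam mu d d')" and no_J2: "\<not> (\<exists>d. J2 l lam mu d)" by simp_all
  have "jcoef n l s lam mu = 0" unfolding jcoef_def if_not_P[OF no_J1] if_not_P[OF no_J2] ..
  then show False using assms by simp
qed

lemma head_res_eq: "head_res n s d R = (s d + cell_content (rhead R)) mod int n"
  unfolding head_res_def res_def content_def cell_content_def by (simp add: add_diff_eq)

lemma jcoef_nonzero_J1: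
  assumes "jcoef n l s lam mu \<noteq> 0" and J: "J1 l lam mu d d'"
  shows "head_res n s d (lam d - mu d) = head_res n s d' (mu d' - lam d')"
proof -
  have ex: "\<exists>d d'. J1 l lam mu d d'" using J by blast
  have some: "(SOME (d, d'). J1 l lam mu d d') = (d, d')"
  proof (rule some_equality)
    fix p :: "nat \<times> nat" assume "case p of (e, e') \<Rightarrow> J1 l lam mu e e'"
    then show "p = (d, d')" using J1_unique[OF J] by (cases p) simp
  qed (use J in simp)
  have "jcoef n l s lam mu = (if head_res n s d (lam d - mu d) = head_res n s d' (mu d' - lam d')
      then (-1) ^ (ht (lam d - mu d) + ht (mu d' - lam d')) else 0)"
    unfolding jcoef_def if_P[OF ex] some Let_def prod.case ..
  then show ?thesis using assms(1) by (simp split: if_splits)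
qed

lemma jcoef_nonzero_J2:
  assumes "jcoef n l s lam mu \<noteq> 0" and J: "J2 l lam mu d"
  shows "head_res n s d (lam d - (lam d \<inter> mu d)) = head_res n s d (mu d - (lam d \<inter> mu d))
    \<or> int n dvd int (card (lam d - (lam d \<inter> mu d)))"
proof -
  define \<rho> where "\<rho> = lam d - (lam d \<inter> mu d)"
  define \<rho>' where "\<rho>' = mu d - (lam d \<inter> mu d)"
  have no_J1: "\<not> (\<exists>d d'. J1 l lam mu d d')" using not_J1_and_J2 J by blast
  have ex: "\<exists>d. J2 l lam mu d" using J by blast
  have some: "(SOME d. J2 l lam mu d) = d"
    using J J2_unique some_equality by metis
  have "jcoef n l s lam mu = (-1) ^ (ht \<rho> + ht \<rho>') *
      (if head_res n s d \<rho> = head_res n s d \<rho>' \<and> \<not> int n dvd int (card \<rho>) then 1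
       else if head_res n s d \<rho> \<noteq> head_res n s d \<rho>' \<and> int n dvd int (card \<rho>) then -1
       else 0)"
    unfolding jcoef_def if_not_P[OF no_J1] if_P[OF ex] some Let_def \<rho>_def \<rho>'_def ..
  then show ?thesis
    using assms(1) unfolding \<rho>_def[symmetric] \<rho>'_def[symmetric] by (simp split: if_splits)
qed

lemma sum_periodic_J1:
  fixes f :: "int \<Rightarrow> 'a::cancel_comm_monoid_add"
  assumes "jcoef n l s lam mu \<noteq> 0" and J: "J1 l lam mu d d'" and f: "periodic_mod n f"
  shows "(\<Sum>x\<in>lam d - mu d. f (s d + cell_content x))
    = (\<Sum>x\<in>mu d' - lam d'. f (s d' + cell_content x))"
  using J jcoef_nonzero_J1[OF assms(1) J]
  by (intro sum_periodic_ribbons_eq[OF f]) (auto simp: J1_def head_res_eq)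

lemma sum_periodic_J2:
  fixes f :: "int \<Rightarrow> 'a::cancel_comm_monoid_add"
  assumes "jcoef n l s lam mu \<noteq> 0" and J: "J2 l lam mu d" and f: "periodic_mod n f"
  shows "(\<Sum>x\<in>lam d - (lam d \<inter> mu d). f (s d + cell_content x))
    = (\<Sum>x\<in>mu d - (lam d \<inter> mu d). f (s d + cell_content x))"
  using J jcoef_nonzero_J2[OF assms(1) J]
  by (intro sum_periodic_ribbons_eq[OF f]) (auto simp: J2_def head_res_eq)

lemma sum_components_J1:
  fixes g :: "nat \<Rightarrow> cell \<Rightarrow> 'a::ab_group_add"
  assumes J: "J1 l A B d d'" and fin: "\<forall>b\<in>{1..l}. finite (A b) \<and> finite (B b)"
  shows "(\<Sum>b=1..l. sum (g b) (A b) - sum (g b) (B b))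
    = sum (g d) (A d - B d) - sum (g d') (B d' - A d')"
proof -
  have d: "d \<in> {1..l}" "d' \<in> {1..l}" "d \<noteq> d'" and sub: "B d \<subseteq> A d" "A d' \<subseteq> B d'"
    and other: "\<forall>b\<in>{1..l}. b \<noteq> d \<and> b \<noteq> d' \<longrightarrow> A b = B b"
    using J unfolding J1_def by auto
  have "(\<Sum>b=1..l. sum (g b) (A b) - sum (g b) (B b))
      = (\<Sum>b\<in>{d, d'}. sum (g b) (A b) - sum (g b) (B b))"
    using d other by (intro sum.mono_neutral_right) auto
  also have "\<dots> = sum (g d) (A d - B d) - sum (g d') (B d' - A d')"
    using d sub fin sum.subset_diff[OF sub(1), of "g d"] sum.subset_diff[OF sub(2), of "g d'"]
    by simp
  finally show ?thesis .
qed

lemma sum_components_J2: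
  fixes g :: "nat \<Rightarrow> cell \<Rightarrow> 'a::ab_group_add"
  assumes J: "J2 l A B d" and fin: "\<forall>b\<in>{1..l}. finite (A b) \<and> finite (B b)"
  shows "(\<Sum>b=1..l. sum (g b) (A b) - sum (g b) (B b))
    = sum (g d) (A d - (A d \<inter> B d)) - sum (g d) (B d - (A d \<inter> B d))"
proof -
  have d: "d \<in> {1..l}" and other: "\<forall>b\<in>{1..l}. b \<noteq> d \<longrightarrow> A b = B b"
    using J unfolding J2_def by auto
  have "(\<Sum>b=1..l. sum (g b) (A b) - sum (g b) (B b)) = sum (g d) (A d) - sum (g d) (B d)"
    using d other by (subst sum.mono_neutral_right[of _ "{d}"]) auto
  also have "\<dots> = sum (g d) (A d - (A d \<inter> B d)) - sum (g d) (B d - (A d \<inter> B d))"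
    using d fin sum.subset_diff[of "A d \<inter> B d" "A d" "g d"] sum.subset_diff[of "A d \<inter> B d" "B d" "g d"]
    by simp
  finally show ?thesis .
qed

lemma Ncount_comp_nodes:
  assumes "finite R"
  shows "Ncount n s i (comp_nodes d R)
    = (\<Sum>x\<in>R. of_bool ((s d + cell_content x) mod int n = i mod int n))"
proof -
  have "{\<gamma>\<in>comp_nodes d R. res n (content s \<gamma>) = i mod int n}
      = (\<lambda>(a, b). (a, b, d)) ` (R \<inter> {x. (s d + cell_content x) mod int n = i mod int n})"
    unfolding comp_nodes_def res_def content_def cell_content_def by (auto simp: add_diff_eq)
  moreover have "inj (\<lambda>(a, b). (a :: nat, b :: nat, d))" by (auto simp: inj_def)
  ultimately show ?thesis
    unfolding Ncount_def using assms by (simp add: card_image inj_on_subset sum_of_bool_eq)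
qed

lemma periodic_mod_residue_indicator:
  "periodic_mod n (\<lambda>z. of_bool (z mod int n = i mod int n) :: nat)"
  unfolding periodic_mod_def by simp

lemma Ncount_eq_J1:
  assumes "jcoef n l s lam mu \<noteq> 0" and J: "J1 l lam mu d d'"
  shows "Ncount n s i (comp_nodes d (lam d - mu d)) = Ncount n s i (comp_nodes d' (mu d' - lam d'))"
  using J sum_periodic_J1[OF assms periodic_mod_residue_indicator]
  by (simp add: J1_def Ncount_comp_nodes ribbon_finite)

lemma Ncount_eq_J2:
  assumes "jcoef n l s lam mu \<noteq> 0" and J: "J2 l lam mu d"
  shows "Ncount n s i (comp_nodes d (lam d - (lam d \<inter> mu d)))
    = Ncount n s i (comp_nodes d (mu d - (lam d \<inter> mu d)))"
  using J sum_periodic_J2[OF assms periodic_mod_residue_indicator]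
  by (simp add: J2_def Ncount_comp_nodes ribbon_finite)

lemma card_eq_if_jcoef_nonzero:
  assumes "1 \<le> n" "1 \<le> l"
    and parts: "\<forall>b\<in>{1..l}. is_partition (blam b)" "\<forall>b\<in>{1..l}. is_partition (bmu b)"
    and "is_partition lam" "is_partition mu" "corresp n l s blam lam" "corresp n l s bmu mu"
    and jcoef: "jcoef n l s blam bmu \<noteq> 0"
  shows "card lam = card mu"
proof -
  have finite: "\<forall>b\<in>{1..l}. finite (blam b) \<and> finite (bmu b)"
    using parts is_partition_finite by blast
  have "int (card lam) - int (card mu) = (\<Sum>b=1..l.
      (\<Sum>x\<in>blam b. size_weight n l (s b + cell_content x))
    - (\<Sum>x\<in>bmu b. size_weight n l (s b + cell_content x)))"
    using card_diff_eq_sum_size_weight[OF assms(1-8)] .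
  also have "\<dots> = 0"
    using J1_or_J2_if_jcoef_nonzero[OF jcoef]
  proof (elim disjE exE)
    fix d d' assume J1: "J1 l blam bmu d d'"
    show ?thesis
      using sum_components_J1[OF J1 finite, where g = "\<lambda>b x. size_weight n l (s b + cell_content x)"]
        sum_periodic_J1[OF jcoef J1 periodic_mod_size_weight] by simp
  next
    fix d assume J2: "J2 l blam bmu d"
    show ?thesis
      using sum_components_J2[OF J2 finite, where g = "\<lambda>b x. size_weight n l (s b + cell_content x)"]
        sum_periodic_J2[OF jcoef J2 periodic_mod_size_weight] by simp
  qed
  finally show ?thesis by simp
qed

theorem mainTheorem10:
  fixes n l m :: nat and s :: "nat \<Rightarrow> int"
    and blam bmu :: "nat \<Rightarrow> cell set" and lam mu :: "cell set"
  assumes "1 \<le> n" and "1 \<le> l" and "1 \<le> m"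
    and "blam \<in> Pi_lm l m" and "bmu \<in> Pi_lm l m"
    and "is_partition lam" and "is_partition mu"
    and "corresp n l s blam lam" and "corresp n l s bmu mu"
    and "jcoef n l s blam bmu \<noteq> 0"
  shows "((\<exists>d d'. J1 l blam bmu d d') \<or> (\<exists>d. J2 l blam bmu d))
    \<and> (\<forall>d d'. J1 l blam bmu d d' \<longrightarrow>
          (\<forall>i::int. Ncount n s i (comp_nodes d (blam d - bmu d))
                   = Ncount n s i (comp_nodes d' (bmu d' - blam d'))))
    \<and> (\<forall>d. J2 l blam bmu d \<longrightarrow>
          (\<forall>i::int. Ncount n s i (comp_nodes d (blam d - (blam d \<inter> bmu d)))
                   = Ncount n s i (comp_nodes d (bmu d - (blam d \<inter> bmu d)))))
    \<and> card lam = card mu"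
proof -
  have "\<forall>b\<in>{1..l}. is_partition (blam b)" "\<forall>b\<in>{1..l}. is_partition (bmu b)"
    using assms(4,5) unfolding Pi_lm_def is_multipartition_def by blast+
  then have "card lam = card mu"
    using card_eq_if_jcoef_nonzero assms(1,2,6-10) by blast
  then show ?thesis
    using J1_or_J2_if_jcoef_nonzero Ncount_eq_J1 Ncount_eq_J2 assms(10) by blast
qed

end
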